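(* Let $a_0,a_1,a_2\in\mathbb{C}$ with $a_2\neq0$ such that the polynomial $f(x)=a_0+a_1x+a_2x^2$ has no positive integer root, and let $\Lambda=a_0D+a_1DxD+a_2(Dx)^2D$. Then there is no monic polynomial sequence $\{B_n\}_{n\ge0}$ which is both $\Lambda$-Appell and orthogonal.
   Context: $\mathcal{P}$ is the space of complex polynomials, $D$ the derivative, $x$ multiplication by $x$, products are compositions. A monic polynomial sequence (MPS) is $\{B_n\}_{n\ge0}$ with $B_n$ monic of degree $n$. Under the hypotheses, $\Lambda$ is a lowering operator with $\Lambda(x^n)=nf(n)x^{n-1}$; an MPS is $\Lambda$-Appell if $\Lambda B_{n+1}=\rho_nB_n$ for all $n\ge0$ with $\rho_n=(n+1)f(n+1)$. An MPS is orthogonal if there is a linear functional $u$ on $\mathcal{P}$ with $\langle u,B_nB_m\rangle=0$ for $n\neq m$ and $\langle u,B_n^2\rangle\neq0$ for all $n\ge0$. *)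

theory Defs
  imports "HOL-Computational_Algebra.Polynomial"
begin

definition mulx :: "complex poly \<Rightarrow> complex poly" where
  "mulx p = [:0, 1:] * p"

definition Lam :: "complex \<Rightarrow> complex \<Rightarrow> complex \<Rightarrow> complex poly \<Rightarrow> complex poly" where
  "Lam a0 a1 a2 p =
     smult a0 (pderiv p)
   + smult a1 (pderiv (mulx (pderiv p)))
   + smult a2 (pderiv (mulx (pderiv (mulx (pderiv p)))))"

definition MPS :: "(nat \<Rightarrow> complex poly) \<Rightarrow> bool" where
  "MPS B \<longleftrightarrow> (\<forall>n. degree (B n) = n \<and> lead_coeff (B n) = 1)"

definition Lam_Appell :: "complex \<Rightarrow> complex \<Rightarrow> complex \<Rightarrow> (nat \<Rightarrow> complex poly) \<Rightarrow> bool" where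
  "Lam_Appell a0 a1 a2 B \<longleftrightarrow> MPS B \<and>
     (\<forall>n. Lam a0 a1 a2 (B (Suc n)) =
           smult (of_nat (Suc n) * poly [:a0, a1, a2:] (of_nat (Suc n))) (B n))"

definition lin_functional :: "(complex poly \<Rightarrow> complex) \<Rightarrow> bool" where
  "lin_functional u \<longleftrightarrow> (\<forall>p q. u (p + q) = u p + u q) \<and> (\<forall>c p. u (smult c p) = c * u p)"

definition orthogonal_MPS :: "(nat \<Rightarrow> complex poly) \<Rightarrow> bool" where
  "orthogonal_MPS B \<longleftrightarrow> MPS B \<and> (\<exists>u. lin_functional u \<and>
     (\<forall>n m. n \<noteq> m \<longrightarrow> u (B n * B m) = 0) \<and> (\<forall>n. u (B n * B n) \<noteq> 0))"

end

theory Submission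
  imports Defs
begin

(* The operator Lambda lowers x^k to rho_k x^(k-1) with rho_k = k f(k), so a Lambda-Appell sequence
   is determined by constants kappa_j: the coefficient of x^m in B_(m+j) is
   kappa_j rho_(m+1) ... rho_(m+j).  Orthogonality gives a three-term recurrence
   x B_n = B_(n+1) + beta_n B_n + gamma_n B_(n-1) with gamma_n nonzero.  Comparing the top
   coefficients of the recurrence yields identities in m between the cubic rho and
   kappa_1, ..., kappa_4; since rho has leading coefficient a2 /= 0, they force
   kappa_1 = kappa_3 = 0 and then kappa_2 = 0, and then the recurrence forces gamma_n = 0. *)


definition Lam_factor :: "complex \<Rightarrow> complex \<Rightarrow> complex \<Rightarrow> nat \<Rightarrow> complex" where
  "Lam_factor a0 a1 a2 k = of_nat k * poly [:a0, a1, a2:] (of_nat k)"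

lemma coeff_mulx_Suc [simp]: "coeff (mulx p) (Suc i) = coeff p i"
  by (simp add: mulx_def)

lemma coeff_Lam: "coeff (Lam a0 a1 a2 p) k = Lam_factor a0 a1 a2 (Suc k) * coeff p (Suc k)"
  by (simp add: Lam_def Lam_factor_def mulx_def coeff_pderiv algebra_simps power2_eq_square)

lemma Lam_Appell_coeff:
  assumes "Lam_Appell a0 a1 a2 B"
  shows "Lam_factor a0 a1 a2 (Suc k) * coeff (B (Suc n)) (Suc k)
    = Lam_factor a0 a1 a2 (Suc n) * coeff (B n) k"
proof -
  have "Lam a0 a1 a2 (B (Suc n)) = smult (Lam_factor a0 a1 a2 (Suc n)) (B n)"
    using assms by (simp add: Lam_Appell_def Lam_factor_def)
  from arg_cong[where f = "\<lambda>p. coeff p k", OF this] show ?thesis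
    by (simp add: coeff_Lam)
qed

lemma coeff_below_diagonal_closed_form:
  fixes B :: "nat \<Rightarrow> 'a::field poly" and r :: "nat \<Rightarrow> 'a"
  assumes shift: "\<And>n k. r (Suc k) * coeff (B (Suc n)) (Suc k) = r (Suc n) * coeff (B n) k"
    and r_nz: "\<And>k. r (Suc k) \<noteq> 0"
  shows "coeff (B (m + j)) m = coeff (B j) 0 / (\<Prod>i<j. r (Suc i)) * (\<Prod>i<j. r (m + i + 1))"
proof (induction m)
  case 0
  then show ?case using r_nz by simp
next
  case (Suc m)
  have "r (Suc m) * coeff (B (Suc m + j)) (Suc m) = r (Suc (m + j)) * coeff (B (m + j)) m"
    using shift[of m "m + j"] by simp
  also have "\<dots> = r (Suc m) * (coeff (B j) 0 / (\<Prod>i<j. r (Suc i)) * (\<Prod>i<j. r (Suc m + i + 1)))"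
    unfolding Suc.IH
    using prod.lessThan_Suc_shift[of "\<lambda>i. r (m + i + 1)" j] prod.lessThan_Suc[of "\<lambda>i. r (m + i + 1)" j]
    by (simp add: ac_simps)
  finally show ?case
    by (rule mult_left_cancel[THEN iffD1, OF r_nz])
qed

(* rho is a cubic polynomial in m with leading coefficient a2, so the hypothesis is a polynomial
   identity in m; three of its instances already determine the top coefficients. *)
lemma Lam_factor_relation3_imp_zero:
  fixes a0 a1 a2 e C D :: complex
  defines "\<rho> \<equiv> Lam_factor a0 a1 a2"
  assumes "a2 \<noteq> 0"
    and "\<And>m. D * (\<rho> (m+1) - \<rho> (m+4))
      = e * C * (\<rho> (m+3) - \<rho> (m+4)) + e * C * (\<rho> (m+2) - \<rho> (m+4)) - e^3 * (\<rho> (m+3) - \<rho> (m+4))"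
  shows "D = 0 \<and> e = 0"
proof -
  note eqs = assms(3)[of 0, unfolded \<rho>_def Lam_factor_def]
    assms(3)[of 1, unfolded \<rho>_def Lam_factor_def]
    assms(3)[of 2, unfolded \<rho>_def Lam_factor_def]
  have "a2 * (3 * D + e^3 - 3 * e * C) = 0" using eqs by simp algebra
  then have W: "3 * D + e^3 - 3 * e * C = 0" using assms(2) by simp
  have "a2 * (3 * D - e * C) = 0" using eqs W by simp algebra
  then have X: "3 * D - e * C = 0" using assms(2) by simp
  have "a2 * D = 0" using eqs W X by simp algebra
  then have "D = 0" using assms(2) by simp
  moreover from this have "e^3 = 0" using W X by algebra
  ultimately show ?thesis by simp
qed

lemma Lam_factor_relation4_imp_zero:
  fixes a0 a1 a2 C E :: complex
  defines "\<rho> \<equiv> Lam_factor a0 a1 a2"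
  assumes "a2 \<noteq> 0"
    and "\<And>m. E * (\<rho> (m+1) - \<rho> (m+5)) = C^2 * (\<rho> (m+3) - \<rho> (m+5))"
  shows "C = 0"
proof -
  note eqs = assms(3)[of 0, unfolded \<rho>_def Lam_factor_def]
    assms(3)[of 1, unfolded \<rho>_def Lam_factor_def]
    assms(3)[of 2, unfolded \<rho>_def Lam_factor_def]
  have "a2 * (2 * E - C^2) = 0" using eqs by simp algebra
  then have "2 * E - C^2 = 0" using assms(2) by simp
  then have "a2 * C^2 = 0" using eqs by simp algebra
  then show ?thesis using assms(2) by simp
qed

lemma lin_functional_zero:
  assumes "lin_functional u"
  shows "u 0 = 0"
  using assms[unfolded lin_functional_def, THEN conjunct2, rule_format, of 0 0] by simp

lemma lin_functional_diff:
  assumes "lin_functional u"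
  shows "u (p - q) = u p - u q"
  using assms[unfolded lin_functional_def, THEN conjunct1, rule_format, of "p - q" q] by simp

lemma lin_functional_sum:
  assumes "lin_functional u"
  shows "u (\<Sum>a\<in>A. f a) = (\<Sum>a\<in>A. u (f a))"
proof (induction A rule: infinite_finite_induct)
  case (infinite A)
  then show ?case using lin_functional_zero[OF assms] by simp
next
  case empty
  then show ?case using lin_functional_zero[OF assms] by simp
next
  case (insert a A)
  then show ?case using assms by (simp add: lin_functional_def)
qed

lemma MPS_degree: "MPS B \<Longrightarrow> degree (B n) = n"
  by (simp add: MPS_def)

lemma MPS_lead_coeff: "MPS B \<Longrightarrow> coeff (B n) n = 1"
  unfolding MPS_def by (metis (no_types))

lemma MPS_coeff_above: "MPS B \<Longrightarrow> n < i \<Longrightarrow> coeff (B n) i = 0"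
  by (simp add: MPS_degree coeff_eq_0)

lemma MPS_0: "MPS B \<Longrightarrow> B 0 = 1"
  by (metis MPS_lead_coeff MPS_degree degree_0_id one_pCons)

lemma MPS_expansion:
  assumes "MPS B" and "degree p \<le> d"
  shows "\<exists>c. p = (\<Sum>i\<le>d. smult (c i) (B i))"
  using assms(2)
proof (induction d arbitrary: p)
  case 0
  then have "p = smult (coeff p 0) (B 0)"
    using MPS_0[OF assms(1)] by (simp add: degree_0_id)
  then show ?case by auto
next
  case (Suc d)
  define q where "q = p - smult (coeff p (Suc d)) (B (Suc d))"
  have "degree q \<le> d"
  proof (rule degree_le, intro allI impI)
    fix i assume "d < i"
    then consider "i = Suc d" | "Suc d < i" by linarith
    then show "coeff q i = 0"
    proof cases
      case 1
      then show ?thesis using assms(1) by (simp add: q_def MPS_lead_coeff)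
    next
      case 2
      then show ?thesis using Suc.prems assms(1)
        by (simp add: q_def MPS_coeff_above coeff_eq_0)
    qed
  qed
  then obtain c where "q = (\<Sum>i\<le>d. smult (c i) (B i))"
    using Suc.IH by blast
  then have "p = (\<Sum>i\<le>d. smult (c i) (B i)) + smult (coeff p (Suc d)) (B (Suc d))"
    by (metis q_def diff_add_cancel)
  also have "\<dots> = (\<Sum>i\<le>Suc d. smult ((c(Suc d := coeff p (Suc d))) i) (B i))"
    by simp
  finally show ?case by blast
qed

lemma degree_mulx_MPS_diff:
  assumes "MPS B"
  shows "degree (mulx (B k) - B (Suc k)) \<le> k"
proof (rule degree_le, intro allI impI)
  fix i assume "k < i"
  then obtain j where "i = Suc j" and "k \<le> j" by (cases i) auto
  moreover have "coeff (B k) j = coeff (B (Suc k)) (Suc j)"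
    using assms \<open>k \<le> j\<close> by (cases "j = k") (simp_all add: MPS_lead_coeff MPS_coeff_above)
  ultimately show "coeff (mulx (B k) - B (Suc k)) i = 0"
    by simp
qed

locale MPS_orthogonal =
  fixes B :: "nat \<Rightarrow> complex poly" and u :: "complex poly \<Rightarrow> complex"
  assumes MPS: "MPS B"
    and lin: "lin_functional u"
    and orthogonal: "\<And>n m. n \<noteq> m \<Longrightarrow> u (B n * B m) = 0"
    and norm_nz: "\<And>n. u (B n * B n) \<noteq> 0"
begin

lemma u_mult_expansion:
  "u (B j * (\<Sum>i\<le>d. smult (c i) (B i))) = (if j \<le> d then c j * u (B j * B j) else 0)"
proof -
  have "u (B j * (\<Sum>i\<le>d. smult (c i) (B i))) = (\<Sum>i\<le>d. c i * u (B j * B i))"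
    using lin by (simp add: sum_distrib_left lin_functional_sum lin_functional_def)
  also have "\<dots> = (\<Sum>i\<le>d. if i = j then c j * u (B j * B j) else 0)"
    by (rule sum.cong) (auto simp: orthogonal)
  finally show ?thesis by simp
qed

lemma orthogonal_lower_degree:
  assumes "degree p < n"
  shows "u (B n * p) = 0"
proof -
  define d where "d = degree p"
  obtain c where "p = (\<Sum>i\<le>d. smult (c i) (B i))"
    using MPS_expansion[OF MPS] d_def by blast
  moreover have "d < n" using assms d_def by simp
  ultimately show ?thesis by (simp add: u_mult_expansion)
qed

lemma mult_mulx_commute: "p * mulx q = q * mulx p"
  by (simp add: mulx_def ac_simps)

lemma three_term_recurrence:
  "\<exists>\<beta> \<gamma>. \<gamma> \<noteq> 0 \<and> mulx (B (Suc k)) = B (Suc (Suc k)) + smult \<beta> (B (Suc k)) + smult \<gamma> (B k)"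
proof -
  let ?R = "mulx (B (Suc k)) - B (Suc (Suc k))"
  obtain c where R: "?R = (\<Sum>i\<le>Suc k. smult (c i) (B i))"
    using MPS_expansion[OF MPS degree_mulx_MPS_diff[OF MPS]] by blast
  have u_B_R: "u (B j * ?R) = u (B (Suc k) * mulx (B j))" if "j \<le> k" for j
    using that lin
    by (simp add: right_diff_distrib lin_functional_diff orthogonal mult_mulx_commute[of "B j"])
  have "c j = 0" if "j < k" for j
  proof -
    have "c j * u (B j * B j) = u (B j * ?R)"
      unfolding R u_mult_expansion using that by simp
    also have "\<dots> = u (B (Suc k) * mulx (B j))"
      using that by (simp add: u_B_R)
    also have "\<dots> = 0"
      using that degree_pCons_le[of 0 "B j"]
      by (intro orthogonal_lower_degree) (simp add: mulx_def MPS_degree[OF MPS])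
    finally show ?thesis using norm_nz by simp
  qed
  then have "?R = smult (c (Suc k)) (B (Suc k)) + smult (c k) (B k)"
    by (simp add: R lessThan_Suc_atMost[symmetric])
  moreover have "c k \<noteq> 0"
  proof -
    have "c k * u (B k * B k) = u (B k * ?R)"
      unfolding R u_mult_expansion by simp
    also have "\<dots> = u (B (Suc k) * mulx (B k))"
      by (simp add: u_B_R)
    also have "\<dots> = u (B (Suc k) * B (Suc k)) + u (B (Suc k) * (mulx (B k) - B (Suc k)))"
      using lin_functional_diff[OF lin] by (simp add: right_diff_distrib)
    also have "\<dots> = u (B (Suc k) * B (Suc k))"
      using degree_mulx_MPS_diff[OF MPS, of k] by (simp add: orthogonal_lower_degree)
    finally show ?thesis using norm_nz by auto
  qed
  ultimately show ?thesis
    by (metis (no_types) add.commute diff_eq_eq add.assoc)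
qed

lemma three_term_recurrence_coeff:
  obtains \<beta> \<gamma> where "\<gamma> \<noteq> 0"
    and "\<And>j. coeff (B (Suc k)) j
          = coeff (B (Suc (Suc k))) (Suc j) + \<beta> * coeff (B (Suc k)) (Suc j) + \<gamma> * coeff (B k) (Suc j)"
proof -
  obtain \<beta> \<gamma> where "\<gamma> \<noteq> 0"
    and rec: "mulx (B (Suc k)) = B (Suc (Suc k)) + smult \<beta> (B (Suc k)) + smult \<gamma> (B k)"
    using three_term_recurrence by blast
  moreover have "coeff (B (Suc k)) j
      = coeff (B (Suc (Suc k))) (Suc j) + \<beta> * coeff (B (Suc k)) (Suc j) + \<gamma> * coeff (B k) (Suc j)" for j
    using arg_cong[where f = "\<lambda>p. coeff p (Suc j)", OF rec] by simp
  ultimately show ?thesis using that by blast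
qed

end

locale Lam_Appell_orthogonal = MPS_orthogonal +
  fixes a0 a1 a2 :: complex
  assumes Appell: "Lam_Appell a0 a1 a2 B"
    and a2_nz: "a2 \<noteq> 0"
    and no_positive_root: "\<forall>n::nat. n \<ge> 1 \<longrightarrow> poly [:a0, a1, a2:] (of_nat n) \<noteq> 0"
begin

abbreviation \<rho> :: "nat \<Rightarrow> complex" where
  "\<rho> \<equiv> Lam_factor a0 a1 a2"

lemma Lam_factor_Suc_nz: "\<rho> (Suc k) \<noteq> 0"
  using no_positive_root by (simp add: Lam_factor_def del: of_nat_Suc)

definition \<kappa> :: "nat \<Rightarrow> complex" where
  "\<kappa> j = coeff (B j) 0 / (\<Prod>i<j. \<rho> (Suc i))"

lemma coeff_B: "coeff (B (m + j)) m = \<kappa> j * (\<Prod>i<j. \<rho> (m + i + 1))"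
  unfolding \<kappa>_def
  by (rule coeff_below_diagonal_closed_form[OF Lam_Appell_coeff[OF Appell] Lam_factor_Suc_nz])

lemma \<kappa>3_\<kappa>1_zero: "\<kappa> 3 = 0 \<and> \<kappa> 1 = 0"
proof (rule Lam_factor_relation3_imp_zero[where e = "\<kappa> 1" and C = "\<kappa> 2" and D = "\<kappa> 3", OF a2_nz])
  fix m
  note numerals[simp] = numeral_eq_Suc add_Suc_right
  obtain \<beta> \<gamma> where rec: "\<And>j. coeff (B (Suc (m+2))) j
      = coeff (B (Suc (Suc (m+2)))) (Suc j) + \<beta> * coeff (B (Suc (m+2))) (Suc j)
        + \<gamma> * coeff (B (m+2)) (Suc j)"
    using three_term_recurrence_coeff[of "m+2"] by blast
  have top1: "\<kappa> 1 * \<rho> (m+3) = \<kappa> 1 * \<rho> (m+4) + \<beta>"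
    using rec[of "m+2"] coeff_B[of "m+2" 1] coeff_B[of "m+3" 1] MPS_lead_coeff[OF MPS, of "m+3"]
      MPS_coeff_above[OF MPS, of "m+2" "m+3"] by simp
  have top2: "\<kappa> 2 * \<rho> (m+2) * \<rho> (m+3)
      = \<kappa> 2 * \<rho> (m+3) * \<rho> (m+4) + \<beta> * (\<kappa> 1 * \<rho> (m+3)) + \<gamma>"
    using rec[of "m+1"] coeff_B[of "m+1" 2] coeff_B[of "m+2" 2] coeff_B[of "m+2" 1]
      MPS_lead_coeff[OF MPS, of "m+2"] by (simp add: mult.assoc)
  have top3: "\<kappa> 3 * \<rho> (m+1) * \<rho> (m+2) * \<rho> (m+3)
      = \<kappa> 3 * \<rho> (m+2) * \<rho> (m+3) * \<rho> (m+4) + \<beta> * (\<kappa> 2 * \<rho> (m+2) * \<rho> (m+3))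
        + \<gamma> * (\<kappa> 1 * \<rho> (m+2))"
    using rec[of m] coeff_B[of m 3] coeff_B[of "m+1" 3] coeff_B[of "m+1" 2] coeff_B[of "m+1" 1]
    by (simp add: ac_simps)
  have "\<rho> (m+2) * \<rho> (m+3) * (\<kappa> 3 * (\<rho> (m+1) - \<rho> (m+4))
      - (\<kappa> 1 * \<kappa> 2 * (\<rho> (m+3) - \<rho> (m+4)) + \<kappa> 1 * \<kappa> 2 * (\<rho> (m+2) - \<rho> (m+4))
         - \<kappa> 1 ^ 3 * (\<rho> (m+3) - \<rho> (m+4)))) = 0"
    using top1 top2 top3 by algebra
  then show "\<kappa> 3 * (\<rho> (m+1) - \<rho> (m+4))
      = \<kappa> 1 * \<kappa> 2 * (\<rho> (m+3) - \<rho> (m+4)) + \<kappa> 1 * \<kappa> 2 * (\<rho> (m+2) - \<rho> (m+4))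
        - \<kappa> 1 ^ 3 * (\<rho> (m+3) - \<rho> (m+4))"
    using Lam_factor_Suc_nz[of "m+1"] Lam_factor_Suc_nz[of "m+2"] by simp
qed

lemma \<kappa>2_zero: "\<kappa> 2 = 0"
proof (rule Lam_factor_relation4_imp_zero[where C = "\<kappa> 2" and E = "\<kappa> 4", OF a2_nz])
  fix m
  note numerals[simp] = numeral_eq_Suc add_Suc_right
  obtain \<beta> \<gamma> where rec: "\<And>j. coeff (B (Suc (m+3))) j
      = coeff (B (Suc (Suc (m+3)))) (Suc j) + \<beta> * coeff (B (Suc (m+3))) (Suc j)
        + \<gamma> * coeff (B (m+3)) (Suc j)"
    using three_term_recurrence_coeff[of "m+3"] by blast
  have \<beta>: "\<beta> = 0"
    using rec[of "m+3"] coeff_B[of "m+3" 1] coeff_B[of "m+4" 1] MPS_lead_coeff[OF MPS, of "m+4"]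
      MPS_coeff_above[OF MPS, of "m+3" "m+4"] \<kappa>3_\<kappa>1_zero by simp
  have top2: "\<kappa> 2 * \<rho> (m+3) * \<rho> (m+4) = \<kappa> 2 * \<rho> (m+4) * \<rho> (m+5) + \<gamma>"
    using rec[of "m+2"] coeff_B[of "m+2" 2] coeff_B[of "m+3" 2] MPS_lead_coeff[OF MPS, of "m+3"] \<beta>
    by (simp add: mult.assoc)
  have top4: "\<kappa> 4 * \<rho> (m+1) * \<rho> (m+2) * \<rho> (m+3) * \<rho> (m+4)
      = \<kappa> 4 * \<rho> (m+2) * \<rho> (m+3) * \<rho> (m+4) * \<rho> (m+5)
        + \<gamma> * (\<kappa> 2 * \<rho> (m+2) * \<rho> (m+3))"
    using rec[of m] coeff_B[of m 4] coeff_B[of "m+1" 4] coeff_B[of "m+1" 2] \<beta> by (simp add: ac_simps)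
  have "\<rho> (m+2) * \<rho> (m+3) * \<rho> (m+4)
      * (\<kappa> 4 * (\<rho> (m+1) - \<rho> (m+5)) - \<kappa> 2 ^ 2 * (\<rho> (m+3) - \<rho> (m+5))) = 0"
    using top2 top4 by algebra
  then show "\<kappa> 4 * (\<rho> (m+1) - \<rho> (m+5)) = \<kappa> 2 ^ 2 * (\<rho> (m+3) - \<rho> (m+5))"
    using Lam_factor_Suc_nz[of "m+1"] Lam_factor_Suc_nz[of "m+2"] Lam_factor_Suc_nz[of "m+3"]
    by simp
qed

end

theorem theorem3:
  fixes a0 a1 a2 :: complex
  assumes "a2 \<noteq> 0"
    and "\<forall>n::nat. n \<ge> 1 \<longrightarrow> poly [:a0, a1, a2:] (of_nat n) \<noteq> 0"
  shows "\<not> (\<exists>B. Lam_Appell a0 a1 a2 B \<and> orthogonal_MPS B)"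
proof
  assume "\<exists>B. Lam_Appell a0 a1 a2 B \<and> orthogonal_MPS B"
  then obtain B u where "Lam_Appell a0 a1 a2 B" and "MPS B" and "lin_functional u"
    and "\<forall>n m. n \<noteq> m \<longrightarrow> u (B n * B m) = 0" and "\<forall>n. u (B n * B n) \<noteq> 0"
    unfolding orthogonal_MPS_def by blast
  then interpret Lam_Appell_orthogonal B u a0 a1 a2
    using assms by unfold_locales auto
  obtain \<beta> \<gamma> where "\<gamma> \<noteq> 0"
    and "coeff (B 2) 0 = coeff (B 3) 1 + \<beta> * coeff (B 2) 1 + \<gamma> * coeff (B 1) 1"
    using three_term_recurrence_coeff[of 1] by (metis numeral_2_eq_2 numeral_3_eq_3 One_nat_def)
  moreover have "coeff (B 2) 0 = 0" and "coeff (B 3) 1 = 0" and "coeff (B 2) 1 = 0"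
    using coeff_B[of 0 2] coeff_B[of 1 2] coeff_B[of 1 1] \<kappa>2_zero \<kappa>3_\<kappa>1_zero
    by (simp_all add: numeral_2_eq_2 numeral_3_eq_3)
  moreover have "coeff (B 1) 1 = 1"
    by (rule MPS_lead_coeff[OF MPS])
  ultimately show False by simp
qed

end
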